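(* Let $\mathcal{S}=\{S_1,\dots,S_N\}\subset\mathbb{R}^Q_{\ge0}$, let $\Delta$ be a diagonal matrix with positive diagonal entries, and let $\rho\in\mathbb{R}^Q$ with all $\rho_q>0$ satisfy $\rho\notin\mathcal{P}$. Then there exists exactly one vector $\eta$ (a "fixed point") such that $$\eta=\Big[\rho-\sum_m\alpha_mS_m\Big]^+,\quad \alpha_m\ge0,\quad \sum_m\alpha_m=1,\quad \alpha_m>0\implies\langle\eta,\Delta S_m\rangle\ge\langle\eta,\Delta S_k\rangle\ \ \forall k.$$
   Context: $[x]^+$ is the componentwise positive part; $\langle x,y\rangle=\sum_qx_qy_q$. Stability region $\mathcal{P}=\{r\in\mathbb{R}^Q_{\ge0}: r\le\sum_n\alpha_nS_n\text{ componentwise for some }\alpha_n\ge0,\sum_n\alpha_n=1\}$. *)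

theory Defs
  imports "HOL-Analysis.Analysis"
begin

definition pos_part :: "real^'q \<Rightarrow> real^'q" where
  "pos_part x = (\<chi> q. max (x $ q) 0)"

definition stab_region :: "('m::finite \<Rightarrow> real^'q) \<Rightarrow> (real^'q) set" where
  "stab_region S = {r. (\<forall>q. 0 \<le> r $ q) \<and>
     (\<exists>\<alpha>::'m \<Rightarrow> real. (\<forall>n. 0 \<le> \<alpha> n) \<and> (\<Sum>n\<in>UNIV. \<alpha> n) = 1 \<and>
        (\<forall>q. r $ q \<le> (\<Sum>n\<in>UNIV. \<alpha> n *\<^sub>R S n) $ q))}"

end

theory Submission
  imports Defs
begin

text \<open>
  Existence: let \<open>a\<close> minimise \<open>\<langle>\<eta>, \<Delta>\<eta>\<rangle>\<close>, \<open>\<eta> = [\<rho> - \<Sum>\<^sub>m a\<^sub>m S\<^sub>m]\<^sup>+\<close>, over the probability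
  simplex. Moving weight from \<open>a\<close> towards a single schedule \<open>S\<^sub>k\<close> cannot decrease this
  quantity, and a first-order expansion gives \<open>\<langle>\<eta>, \<Delta>S\<^sub>k\<rangle> \<le> \<Sum>\<^sub>m a\<^sub>m \<langle>\<eta>, \<Delta>S\<^sub>m\<rangle>\<close> for all \<open>k\<close>,
  which forces \<open>a\<close> to be supported on the maximisers of \<open>\<langle>\<eta>, \<Delta>S\<^sub>m\<rangle>\<close>.

  Uniqueness: for two fixed points with service vectors \<open>x\<^sub>1, x\<^sub>2\<close>, the support conditions give
  \<open>\<langle>\<eta>\<^sub>1 - \<eta>\<^sub>2, \<Delta>(x\<^sub>1 - x\<^sub>2)\<rangle> \<ge> 0\<close>, whereas \<open>x \<mapsto> [\<rho> - x]\<^sup>+\<close> is componentwise antitone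
  and firmly nonexpansive, so \<open>\<langle>\<eta>\<^sub>1 - \<eta>\<^sub>2, \<Delta>(\<eta>\<^sub>1 - \<eta>\<^sub>2)\<rangle> \<le> 0\<close> and \<open>\<eta>\<^sub>1 = \<eta>\<^sub>2\<close>.
\<close>

lemma inner_diagonal_matrix_vector:
  fixes D :: "real^'q^'q"
  assumes "\<forall>i j. i \<noteq> j \<longrightarrow> D $ i $ j = 0"
  shows "v \<bullet> (D *v w) = (\<Sum>q\<in>UNIV. D$q$q * v$q * w$q)"
proof -
  have "(D *v w) $ i = D$i$i * w$i" for i
    unfolding matrix_vector_mult_def using assms
    by (simp add: if_distrib sum.If_cases) (subst sum.remove[of _ i], auto)
  then show ?thesis
    unfolding inner_vec_def by (simp add: mult.commute mult.left_commute)
qed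

lemma inner_matrix_vector_sum_scaleR:
  fixes D :: "real^'q^'q" and S :: "'m \<Rightarrow> real^'q"
  shows "\<eta> \<bullet> (D *v (\<Sum>m\<in>A. a m *\<^sub>R S m)) = (\<Sum>m\<in>A. a m * (\<eta> \<bullet> (D *v S m)))"
  by (simp add: linear_sum[OF matrix_vector_mul_linear] matrix_vector_mult_scaleR inner_sum_right)

lemma diagonal_quadratic_form_le_0_imp_eq_0:
  fixes D :: "real^'q^'q"
  assumes "\<forall>i j. i \<noteq> j \<longrightarrow> D $ i $ j = 0" and "\<forall>i. 0 < D $ i $ i"
    and "v \<bullet> (D *v v) \<le> 0"
  shows "v = 0"
proof -
  have nonneg: "0 \<le> D$q$q * v$q * v$q" for q
    using assms(2) by (simp add: less_imp_le mult.assoc)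
  have "0 \<le> (\<Sum>q\<in>UNIV. D$q$q * v$q * v$q)"
    by (rule sum_nonneg) (rule nonneg)
  then have "(\<Sum>q\<in>UNIV. D$q$q * v$q * v$q) = 0"
    using assms(3) unfolding inner_diagonal_matrix_vector[OF assms(1)] by linarith
  then have "D$q$q * v$q * v$q = 0" for q
    using sum_nonneg_eq_0_iff[of UNIV "\<lambda>q. D$q$q * v$q * v$q"] nonneg by simp
  then show ?thesis
    using assms(2) by (simp add: vec_eq_iff) (metis less_irrefl)
qed

lemma max_zero_add_square_le:
  fixes u d :: real
  shows "(max (u + d) 0)\<^sup>2 \<le> (max u 0)\<^sup>2 + 2 * max u 0 * d + d\<^sup>2"
proof (cases "0 < u")
  case True
  have "0 \<le> (u + d)\<^sup>2" by simp
  with True show ?thesis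
    by (cases "0 < u + d") (simp_all add: power2_eq_square algebra_simps)
next
  case False
  then show ?thesis
    by (cases "0 < u + d") (auto intro: power_mono)
qed

lemma max_zero_sub_firmly_antitone:
  fixes r x1 x2 :: real
  defines "e \<equiv> max (r - x1) 0 - max (r - x2) 0"
  shows "e * (x1 - x2) + e\<^sup>2 \<le> 0"
proof -
  consider "r \<le> x1" "r \<le> x2" | "r \<le> x1" "x2 < r" | "x1 < r" "r \<le> x2" | "x1 < r" "x2 < r"
    by linarith
  then show ?thesis
  proof cases
    case 2
    then have "e * (x1 - x2) + e\<^sup>2 = (r - x2) * (r - x1)"
      by (simp add: e_def power2_eq_square algebra_simps)
    with 2 show ?thesis by (simp add: mult_nonneg_nonpos)
  next
    case 3
    then have "e * (x1 - x2) + e\<^sup>2 = (r - x1) * (r - x2)"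
      by (simp add: e_def power2_eq_square algebra_simps)
    with 3 show ?thesis by (simp add: mult_nonneg_nonpos)
  qed (simp_all add: e_def power2_eq_square algebra_simps)
qed

lemma pos_part_sub_add_quadratic_le:
  fixes D :: "real^'q^'q" and \<rho> x w :: "real^'q"
  assumes diag: "\<forall>i j. i \<noteq> j \<longrightarrow> D $ i $ j = 0" and nonneg: "\<forall>i. 0 \<le> D $ i $ i"
  defines "\<eta> \<equiv> pos_part (\<rho> - x)" and "\<eta>' \<equiv> pos_part (\<rho> - (x + w))"
  shows "\<eta>' \<bullet> (D *v \<eta>') \<le> \<eta> \<bullet> (D *v \<eta>) - 2 * (\<eta> \<bullet> (D *v w)) + w \<bullet> (D *v w)"
proof -
  have "(\<eta>'$q)\<^sup>2 \<le> (\<eta>$q)\<^sup>2 + 2 * \<eta>$q * - w$q + (- w$q)\<^sup>2" for q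
    using max_zero_add_square_le[of "(\<rho> - x)$q" "- w$q"]
    by (simp add: \<eta>_def \<eta>'_def pos_part_def algebra_simps)
  then have "D$q$q * \<eta>'$q * \<eta>'$q \<le> D$q$q * (\<eta>$q * \<eta>$q - 2 * \<eta>$q * w$q + w$q * w$q)" for q
    using nonneg by (simp add: mult.assoc mult_left_mono power2_eq_square)
  then have "(\<Sum>q\<in>UNIV. D$q$q * \<eta>'$q * \<eta>'$q)
      \<le> (\<Sum>q\<in>UNIV. D$q$q * (\<eta>$q * \<eta>$q - 2 * \<eta>$q * w$q + w$q * w$q))"
    by (simp add: mult.assoc sum_mono)
  then show ?thesis
    unfolding inner_diagonal_matrix_vector[OF diag]
    by (simp add: algebra_simps sum.distrib sum_subtractf sum_distrib_left)
qed

lemma pos_part_sub_firmly_antitone: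
  fixes D :: "real^'q^'q" and \<rho> x1 x2 :: "real^'q"
  assumes diag: "\<forall>i j. i \<noteq> j \<longrightarrow> D $ i $ j = 0" and nonneg: "\<forall>i. 0 \<le> D $ i $ i"
  defines "e \<equiv> pos_part (\<rho> - x1) - pos_part (\<rho> - x2)"
  shows "e \<bullet> (D *v (x1 - x2)) + e \<bullet> (D *v e) \<le> 0"
proof -
  have "D$q$q * (e$q * (x1$q - x2$q) + e$q * e$q) \<le> 0" for q
    using max_zero_sub_firmly_antitone[of "\<rho>$q" "x1$q" "x2$q"] nonneg
    by (intro mult_nonneg_nonpos) (simp_all add: e_def pos_part_def power2_eq_square)
  then have "(\<Sum>q\<in>UNIV. D$q$q * (e$q * (x1$q - x2$q) + e$q * e$q)) \<le> 0"
    by (simp add: sum_nonpos)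
  then show ?thesis
    unfolding inner_diagonal_matrix_vector[OF diag]
    by (simp add: algebra_simps sum.distrib sum_subtractf)
qed

lemma nonpos_of_quadratic_perturbation:
  fixes g C :: real
  assumes "\<And>t. 0 < t \<Longrightarrow> t \<le> 1 \<Longrightarrow> 2 * t * g \<le> t\<^sup>2 * C"
  shows "g \<le> 0"
proof (rule ccontr)
  assume "\<not> g \<le> 0"
  define t where "t = min 1 (g / (\<bar>C\<bar> + 1))"
  have t: "0 < t" "t \<le> 1" "t * \<bar>C\<bar> < g"
    using \<open>\<not> g \<le> 0\<close> by (auto simp: t_def min_def field_simps)
  have "t\<^sup>2 * C \<le> t * (t * \<bar>C\<bar>)"
    using t by (simp add: power2_eq_square mult_left_mono)
  also have "\<dots> < t * g" using t by simp
  also have "\<dots> \<le> 2 * t * g" using t \<open>\<not> g \<le> 0\<close> by simp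
  finally show False using assms[OF t(1,2)] by linarith
qed

lemma weighted_sum_le_of_support_argmax:
  fixes \<alpha> \<beta> f :: "'m::finite \<Rightarrow> real"
  assumes "\<forall>m. 0 \<le> \<alpha> m" "(\<Sum>m\<in>UNIV. \<alpha> m) = 1"
    and support: "\<forall>m. 0 < \<alpha> m \<longrightarrow> (\<forall>k. f k \<le> f m)"
    and "\<forall>m. 0 \<le> \<beta> m" "(\<Sum>m\<in>UNIV. \<beta> m) = 1"
  shows "(\<Sum>k\<in>UNIV. \<beta> k * f k) \<le> (\<Sum>m\<in>UNIV. \<alpha> m * f m)"
proof -
  let ?A = "\<Sum>m\<in>UNIV. \<alpha> m * f m"
  have "\<alpha> m * f k \<le> \<alpha> m * f m" for m k
  proof (cases "\<alpha> m = 0")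
    case False
    then have "0 < \<alpha> m" using assms(1) by (metis order_le_less)
    then show ?thesis using support by simp
  qed simp
  then have "f k \<le> ?A" for k
    using sum_mono[of UNIV "\<lambda>m. \<alpha> m * f k"] assms(2) by (simp add: sum_distrib_right[symmetric])
  then have "(\<Sum>k\<in>UNIV. \<beta> k * f k) \<le> (\<Sum>k\<in>UNIV. \<beta> k * ?A)"
    using assms(4) by (intro sum_mono mult_left_mono) auto
  also have "\<dots> = ?A" using assms(5) by (simp add: sum_distrib_right[symmetric])
  finally show ?thesis .
qed

lemma support_argmax_of_weighted_sum_ge:
  fixes \<alpha> f :: "'m::finite \<Rightarrow> real"
  assumes nonneg: "\<forall>m. 0 \<le> \<alpha> m" and sum1: "(\<Sum>m\<in>UNIV. \<alpha> m) = 1"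
    and ge: "\<forall>k. f k \<le> (\<Sum>m\<in>UNIV. \<alpha> m * f m)"
    and "0 < \<alpha> m"
  shows "f k \<le> f m"
proof -
  let ?A = "\<Sum>m\<in>UNIV. \<alpha> m * f m"
  have terms_nonneg: "0 \<le> \<alpha> j * (?A - f j)" for j
    using nonneg ge by simp
  have "(\<Sum>j\<in>UNIV. \<alpha> j * (?A - f j)) = 0"
    using sum1 by (simp add: right_diff_distrib sum_subtractf sum_distrib_right[symmetric])
  then have "\<alpha> m * (?A - f m) = 0"
    using sum_nonneg_eq_0_iff[of UNIV "\<lambda>j. \<alpha> j * (?A - f j)"] terms_nonneg by simp
  with \<open>0 < \<alpha> m\<close> ge show ?thesis by simp
qed

definition is_fixed_point ::
    "('m::finite \<Rightarrow> real^'q) \<Rightarrow> real^'q^'q \<Rightarrow> real^'q \<Rightarrow> real^'q \<Rightarrow> ('m \<Rightarrow> real) \<Rightarrow> bool" where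
  "is_fixed_point S D \<rho> \<eta> \<alpha> \<longleftrightarrow>
     \<eta> = pos_part (\<rho> - (\<Sum>m\<in>UNIV. \<alpha> m *\<^sub>R S m)) \<and>
     (\<forall>m. 0 \<le> \<alpha> m) \<and> (\<Sum>m\<in>UNIV. \<alpha> m) = 1 \<and>
     (\<forall>m. 0 < \<alpha> m \<longrightarrow> (\<forall>k. \<eta> \<bullet> (D *v S m) \<ge> \<eta> \<bullet> (D *v S k)))"

lemma fixed_point_unique:
  fixes D :: "real^'q^'q"
  assumes diag: "\<forall>i j. i \<noteq> j \<longrightarrow> D $ i $ j = 0" and pos: "\<forall>i. 0 < D $ i $ i"
    and fp1: "is_fixed_point S D \<rho> \<eta>1 \<alpha>1" and fp2: "is_fixed_point S D \<rho> \<eta>2 \<alpha>2"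
  shows "\<eta>1 = \<eta>2"
proof -
  define x1 where "x1 = (\<Sum>m\<in>UNIV. \<alpha>1 m *\<^sub>R S m)"
  define x2 where "x2 = (\<Sum>m\<in>UNIV. \<alpha>2 m *\<^sub>R S m)"
  have "\<eta>1 \<bullet> (D *v x2) \<le> \<eta>1 \<bullet> (D *v x1)"
    using fp1 fp2 unfolding x1_def x2_def inner_matrix_vector_sum_scaleR is_fixed_point_def
    by (intro weighted_sum_le_of_support_argmax) auto
  moreover have "\<eta>2 \<bullet> (D *v x1) \<le> \<eta>2 \<bullet> (D *v x2)"
    using fp1 fp2 unfolding x1_def x2_def inner_matrix_vector_sum_scaleR is_fixed_point_def
    by (intro weighted_sum_le_of_support_argmax) auto
  ultimately have "0 \<le> (\<eta>1 - \<eta>2) \<bullet> (D *v (x1 - x2))"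
    by (simp add: matrix_vector_mult_diff_distrib inner_diff)
  moreover have "(\<eta>1 - \<eta>2) \<bullet> (D *v (x1 - x2)) + (\<eta>1 - \<eta>2) \<bullet> (D *v (\<eta>1 - \<eta>2)) \<le> 0"
    using fp1 fp2 pos_part_sub_firmly_antitone[OF diag, of \<rho> x1 x2] pos
    unfolding is_fixed_point_def x1_def x2_def by (simp add: less_imp_le)
  ultimately have "(\<eta>1 - \<eta>2) \<bullet> (D *v (\<eta>1 - \<eta>2)) \<le> 0" by linarith
  then show ?thesis
    using diagonal_quadratic_form_le_0_imp_eq_0[OF diag pos] by fastforce
qed

definition prob_simplex :: "(real^'n) set" where
  "prob_simplex = {a. (\<forall>i. 0 \<le> a$i) \<and> (\<Sum>i\<in>UNIV. a$i) = 1}"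

definition mixture :: "('m::finite \<Rightarrow> real^'q) \<Rightarrow> real^'m \<Rightarrow> real^'q" where
  "mixture S a = (\<Sum>m\<in>UNIV. a$m *\<^sub>R S m)"

definition weighted_backlog :: "real^'q^'q \<Rightarrow> real^'q \<Rightarrow> real^'q \<Rightarrow> real" where
  "weighted_backlog D \<rho> x = pos_part (\<rho> - x) \<bullet> (D *v pos_part (\<rho> - x))"

lemma compact_prob_simplex: "compact prob_simplex"
proof -
  have "prob_simplex \<subseteq> cbox 0 1"
  proof
    fix a assume "a \<in> prob_simplex"
    then have "0 \<le> a$i \<and> a$i \<le> 1" for i
      using member_le_sum[of i UNIV "\<lambda>i. a$i"] by (auto simp: prob_simplex_def)
    then show "a \<in> cbox 0 1" by (simp add: mem_box_cart)
  qed
  moreover have "closed prob_simplex"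
    unfolding prob_simplex_def
    by (intro closed_Collect_conj closed_Collect_all closed_Collect_le closed_Collect_eq
        continuous_intros)
  ultimately have "prob_simplex = cbox 0 1 \<inter> prob_simplex" by blast
  also have "compact \<dots>"
    using \<open>closed prob_simplex\<close> by (rule compact_Int_closed[OF compact_cbox])
  finally show ?thesis .
qed

lemma axis_in_prob_simplex: "axis k 1 \<in> prob_simplex"
  by (simp add: prob_simplex_def axis_def)

lemma prob_simplex_segment_to_axis:
  assumes "a \<in> prob_simplex" and "0 \<le> t" and "t \<le> 1"
  shows "(1 - t) *\<^sub>R a + t *\<^sub>R axis k 1 \<in> prob_simplex"
  using assms by (simp add: prob_simplex_def sum.distrib sum_distrib_left[symmetric] axis_def)

lemma mixture_segment_to_axis:
  "mixture S ((1 - t) *\<^sub>R a + t *\<^sub>R axis k 1) = mixture S a + t *\<^sub>R (S k - mixture S a)"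
proof -
  have "mixture S ((1 - t) *\<^sub>R a + t *\<^sub>R axis k 1)
      = (1 - t) *\<^sub>R mixture S a + t *\<^sub>R (\<Sum>m\<in>UNIV. axis k 1 $ m *\<^sub>R S m)"
    by (simp add: mixture_def scaleR_add_left sum.distrib scaleR_sum_right)
  also have "(\<Sum>m\<in>UNIV. axis k 1 $ m *\<^sub>R S m) = S k"
    by (simp add: axis_def if_distrib[of "\<lambda>c. c *\<^sub>R _"] cong: if_cong)
  finally show ?thesis
    by (simp add: algebra_simps)
qed

lemma continuous_on_weighted_backlog_mixture:
  "continuous_on A (\<lambda>a. weighted_backlog D \<rho> (mixture S a))"
proof -
  have pos: "continuous_on A (\<lambda>a. pos_part (\<rho> - mixture S a))"
    unfolding mixture_def pos_part_def by (intro continuous_intros)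
  have "continuous_on A (\<lambda>a. D *v pos_part (\<rho> - mixture S a))"
    using bounded_linear.continuous_on[OF matrix_vector_mul_bounded_linear pos] .
  with pos show ?thesis
    unfolding weighted_backlog_def by (rule continuous_on_inner)
qed

lemma argmin_weighted_backlog_vertex_le:
  fixes D :: "real^'q^'q"
  assumes diag: "\<forall>i j. i \<noteq> j \<longrightarrow> D $ i $ j = 0" and nonneg: "\<forall>i. 0 \<le> D $ i $ i"
    and a0: "a0 \<in> prob_simplex"
    and min: "\<forall>a\<in>prob_simplex. weighted_backlog D \<rho> (mixture S a0) \<le> weighted_backlog D \<rho> (mixture S a)"
  defines "\<eta> \<equiv> pos_part (\<rho> - mixture S a0)"
  shows "\<eta> \<bullet> (D *v S k) \<le> \<eta> \<bullet> (D *v mixture S a0)"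
proof -
  define w where "w = S k - mixture S a0"
  let ?G = "weighted_backlog D \<rho>"
  have "2 * t * (\<eta> \<bullet> (D *v w)) \<le> t\<^sup>2 * (w \<bullet> (D *v w))" if t: "0 < t" "t \<le> 1" for t
  proof -
    have segment: "mixture S ((1 - t) *\<^sub>R a0 + t *\<^sub>R axis k 1) = mixture S a0 + t *\<^sub>R w"
      unfolding w_def by (rule mixture_segment_to_axis)
    have "?G (mixture S a0) \<le> ?G (mixture S a0 + t *\<^sub>R w)"
      unfolding segment[symmetric] using min prob_simplex_segment_to_axis[OF a0] t by simp
    also have "\<dots> \<le> ?G (mixture S a0) - 2 * (\<eta> \<bullet> (D *v (t *\<^sub>R w))) + (t *\<^sub>R w) \<bullet> (D *v (t *\<^sub>R w))"
      unfolding weighted_backlog_def \<eta>_def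
      by (rule pos_part_sub_add_quadratic_le[OF diag nonneg])
    finally show ?thesis
      by (simp add: matrix_vector_mult_scaleR power2_eq_square)
  qed
  then have "\<eta> \<bullet> (D *v w) \<le> 0"
    by (rule nonpos_of_quadratic_perturbation)
  then show ?thesis
    by (simp add: w_def matrix_vector_mult_diff_distrib inner_diff)
qed

lemma fixed_point_exists:
  fixes S :: "'m::finite \<Rightarrow> real^'q" and D :: "real^'q^'q" and \<rho> :: "real^'q"
  assumes diag: "\<forall>i j. i \<noteq> j \<longrightarrow> D $ i $ j = 0" and nonneg: "\<forall>i. 0 \<le> D $ i $ i"
  shows "\<exists>\<eta> \<alpha>. is_fixed_point S D \<rho> \<eta> \<alpha>"
proof -
  have "prob_simplex \<noteq> {}"
    using axis_in_prob_simplex by blast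
  then obtain a0 where a0: "a0 \<in> prob_simplex"
    and min: "\<forall>a\<in>prob_simplex. weighted_backlog D \<rho> (mixture S a0) \<le> weighted_backlog D \<rho> (mixture S a)"
    using continuous_attains_inf[OF compact_prob_simplex _ continuous_on_weighted_backlog_mixture]
    by blast
  define \<eta> where "\<eta> = pos_part (\<rho> - mixture S a0)"
  have vertex_le: "\<eta> \<bullet> (D *v S k) \<le> (\<Sum>m\<in>UNIV. a0$m * (\<eta> \<bullet> (D *v S m)))" for k
    using argmin_weighted_backlog_vertex_le[OF diag nonneg a0 min]
    unfolding \<eta>_def mixture_def inner_matrix_vector_sum_scaleR .
  have "is_fixed_point S D \<rho> \<eta> (\<lambda>m. a0$m)"
    unfolding is_fixed_point_def
  proof (intro conjI allI impI)
    show "\<eta> = pos_part (\<rho> - (\<Sum>m\<in>UNIV. a0$m *\<^sub>R S m))"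
      by (simp add: \<eta>_def mixture_def)
    show "0 \<le> a0$m" "(\<Sum>m\<in>UNIV. a0$m) = 1" for m
      using a0 by (simp_all add: prob_simplex_def)
    show "\<eta> \<bullet> (D *v S k) \<le> \<eta> \<bullet> (D *v S m)" if "0 < a0$m" for m k
      using a0 vertex_le that unfolding prob_simplex_def
      by (intro support_argmax_of_weighted_sum_ge[where \<alpha> = "\<lambda>m. a0$m"]) auto
  qed
  then show ?thesis by blast
qed

theorem lemma10:
  fixes S :: "'m::finite \<Rightarrow> real^'q"
    and D :: "real^'q^'q"
    and \<rho> :: "real^'q"
  assumes S_nonneg: "\<forall>m q. 0 \<le> S m $ q"
    and D_diag: "\<forall>i j. i \<noteq> j \<longrightarrow> D $ i $ j = 0"
    and D_pos: "\<forall>i. 0 < D $ i $ i"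
    and rho_pos: "\<forall>q. 0 < \<rho> $ q"
    and rho_out: "\<rho> \<notin> stab_region S"
  shows "\<exists>!\<eta>. \<exists>\<alpha>::'m \<Rightarrow> real.
            \<eta> = pos_part (\<rho> - (\<Sum>m\<in>UNIV. \<alpha> m *\<^sub>R S m)) \<and>
            (\<forall>m. 0 \<le> \<alpha> m) \<and> (\<Sum>m\<in>UNIV. \<alpha> m) = 1 \<and>
            (\<forall>m. 0 < \<alpha> m \<longrightarrow> (\<forall>k. \<eta> \<bullet> (D *v S m) \<ge> \<eta> \<bullet> (D *v S k)))"
  unfolding is_fixed_point_def[symmetric]
proof (rule ex_ex1I)
  show "\<exists>\<eta> \<alpha>. is_fixed_point S D \<rho> \<eta> \<alpha>"
    using fixed_point_exists[OF D_diag] D_pos by (simp add: less_imp_le)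
  show "\<eta>1 = \<eta>2" if "\<exists>\<alpha>. is_fixed_point S D \<rho> \<eta>1 \<alpha>" "\<exists>\<alpha>. is_fixed_point S D \<rho> \<eta>2 \<alpha>"
    for \<eta>1 \<eta>2
    using that fixed_point_unique[OF D_diag D_pos] by blast
qed

end
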